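(* Let $\mathbf L$ be an algebraic lattice with an equa-interior operator $\eta$ satisfying property (I9). If $a$, $x$ and $z_i$ ($i\in I$, $I$ an arbitrary index set) are coatoms of $\mathbf L$ with $x\wedge z_i\le a$ properly for every $i\in I$, then $\eta(x)\vee\bigwedge_{i\in I}z_i=1$.
   Context: An equa-interior operator on an algebraic lattice $\mathbf L$ is a map $\eta:L\to L$ such that for all $x,y,z\in L$: (I1) $\eta(x)\le x$; (I2) $x\ge y$ implies $\eta(x)\ge\eta(y)$; (I3) $\eta^2(x)=\eta(x)$; (I4) $\eta(1)=1$; (I5) if $\eta(x)=u$ for all $x\in X\subseteq L$ then $\eta(\bigvee X)=u$; (I6) $\eta(x)\vee(y\wedge z)=(\eta(x)\vee y)\wedge(\eta(x)\vee z)$; (I7) the image $\eta(L)$ is the complete join subsemilattice of $L$ generated by the elements of $\eta(L)$ that are compact in $\mathbf L$; (I8) there is a compact element $w\in L$ with $\eta(w)=w$ such that the interval $[w,1]$ is isomorphic to the congruence lattice of a join semilattice with $0$. Define $\tau(y)=\bigvee\{u\in L:\eta(u)=\eta(y)\}$. Property (I9): for any index set $J$ and elements $x,c,z_j$ ($j\in J$) of $L$, if $\eta(x)\le c$ and $\bigwedge_{j\in J}\tau(z_j)\le\tau(c)$, then $\eta(\eta(x)\vee\bigwedge_{j\in J}\tau(x\wedge z_j))\le c$. For coatoms, "$x\wedge z\le a$ properly" means $x\wedge z\le a$ while $x\not\le a$ and $z\not\le a$. *)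

theory Defs
  imports Main
begin

text \<open>The algebraic lattice is the whole of a type of class complete_lattice.\<close>

definition compact_el :: "'a::complete_lattice \<Rightarrow> bool" where
  "compact_el c \<longleftrightarrow> (\<forall>X. c \<le> Sup X \<longrightarrow> (\<exists>F. finite F \<and> F \<subseteq> X \<and> c \<le> Sup F))"

definition algebraic_lattice :: "'a::complete_lattice itself \<Rightarrow> bool" where
  "algebraic_lattice TYPE('a) \<longleftrightarrow>
     (\<forall>x::'a. x = Sup {c. compact_el c \<and> c \<le> x})"

definition coatom :: "'a::complete_lattice \<Rightarrow> bool" where
  "coatom a \<longleftrightarrow> a < top \<and> (\<forall>y. a \<le> y \<longrightarrow> y = a \<or> y = top)"

definition join_semilattice0 :: "'b set \<Rightarrow> ('b \<Rightarrow> 'b \<Rightarrow> 'b) \<Rightarrow> 'b \<Rightarrow> bool" where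
  "join_semilattice0 S j e \<longleftrightarrow>
     e \<in> S \<and> (\<forall>a\<in>S. \<forall>b\<in>S. j a b \<in> S) \<and>
     (\<forall>a\<in>S. \<forall>b\<in>S. \<forall>c\<in>S. j (j a b) c = j a (j b c)) \<and>
     (\<forall>a\<in>S. \<forall>b\<in>S. j a b = j b a) \<and>
     (\<forall>a\<in>S. j a a = a) \<and>
     (\<forall>a\<in>S. j e a = a)"

text \<open>Congruences of the semilattice (S, j, e): equivalence relations on S compatible with j
  (compatibility with the constant e is automatic).\<close>
definition sl_congruence :: "'b set \<Rightarrow> ('b \<Rightarrow> 'b \<Rightarrow> 'b) \<Rightarrow> ('b \<times> 'b) set \<Rightarrow> bool" where
  "sl_congruence S j \<theta> \<longleftrightarrow> equiv S \<theta> \<and>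
     (\<forall>a b c. (a, b) \<in> \<theta> \<longrightarrow> c \<in> S \<longrightarrow> (j a c, j b c) \<in> \<theta>)"

definition interval_iso_Con :: "'a::complete_lattice \<Rightarrow> 'b set \<Rightarrow> ('b \<Rightarrow> 'b \<Rightarrow> 'b) \<Rightarrow> bool" where
  "interval_iso_Con w S j \<longleftrightarrow>
     (\<exists>f. bij_betw f {x. w \<le> x} {\<theta>. sl_congruence S j \<theta>} \<and>
          (\<forall>x y. w \<le> x \<longrightarrow> w \<le> y \<longrightarrow> (x \<le> y \<longleftrightarrow> f x \<subseteq> f y)))"

text \<open>Equa-interior operator. The semilattice in (I8) lives on a carrier in a type 'b, which is
  universally quantified at theorem level (equivalent to an existential over types in the
  hypothesis).\<close>
definition equa_interior :: "'b itself \<Rightarrow> ('a::complete_lattice \<Rightarrow> 'a) \<Rightarrow> bool" where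
  "equa_interior TYPE('b) \<eta> \<longleftrightarrow>
     (\<forall>x. \<eta> x \<le> x) \<and>
     (\<forall>x y. y \<le> x \<longrightarrow> \<eta> y \<le> \<eta> x) \<and>
     (\<forall>x. \<eta> (\<eta> x) = \<eta> x) \<and>
     \<eta> top = top \<and>
     (\<forall>X u. X \<noteq> {} \<longrightarrow> (\<forall>x\<in>X. \<eta> x = u) \<longrightarrow> \<eta> (Sup X) = u) \<and>
     (\<forall>x y z. sup (\<eta> x) (inf y z) = inf (sup (\<eta> x) y) (sup (\<eta> x) z)) \<and>
     range \<eta> = {Sup Y | Y. Y \<subseteq> {c \<in> range \<eta>. compact_el c}} \<and>
     (\<exists>w. compact_el w \<and> \<eta> w = w \<and>
        (\<exists>(S::'b set) j e. join_semilattice0 S j e \<and> interval_iso_Con w S j))"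

definition tau :: "('a::complete_lattice \<Rightarrow> 'a) \<Rightarrow> 'a \<Rightarrow> 'a" where
  "tau \<eta> y = Sup {u. \<eta> u = \<eta> y}"

text \<open>Property (I9); a family (z_j) enters only through its set of values Z.\<close>
definition prop_I9 :: "('a::complete_lattice \<Rightarrow> 'a) \<Rightarrow> bool" where
  "prop_I9 \<eta> \<longleftrightarrow>
     (\<forall>x c Z. \<eta> x \<le> c \<longrightarrow> Inf (tau \<eta> ` Z) \<le> tau \<eta> c \<longrightarrow>
        \<eta> (sup (\<eta> x) (Inf ((\<lambda>z. tau \<eta> (inf x z)) ` Z))) \<le> c)"

definition below_properly :: "'a::complete_lattice \<Rightarrow> 'a \<Rightarrow> 'a \<Rightarrow> bool" where
  "below_properly x z a \<longleftrightarrow> inf x z \<le> a \<and> \<not> x \<le> a \<and> \<not> z \<le> a"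

end

theory Submission
  imports Defs
begin

text \<open>Since \<open>\<eta> a \<squnion> (x \<sqinter> z\<^sub>i) \<le> a\<close>, distributivity (I6) and the coatom property force
  \<open>\<eta> a \<le> x \<sqinter> z\<^sub>i \<le> a\<close>, so \<open>\<eta>\<close> identifies \<open>x \<sqinter> z\<^sub>i\<close> with \<open>a\<close> and \<open>\<tau>(x \<sqinter> z\<^sub>i) = a\<close>.
  If \<open>\<eta> x \<le> a\<close> then also \<open>\<eta> x = \<eta> a\<close>, and (I5) gives \<open>\<eta> 1 = \<eta> (x \<squnion> a) = \<eta> x\<close>,
  impossible; hence \<open>\<eta> x \<squnion> a = 1\<close>. Applying (I9) with \<open>c = \<eta> x \<squnion> \<Sqinter>\<^sub>i z\<^sub>i\<close> (coatoms are
  fixed by \<open>\<tau>\<close>) yields \<open>1 = \<eta> (\<eta> x \<squnion> a) \<le> c\<close>.\<close>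

lemma coatom_neq_top: "coatom c \<Longrightarrow> c \<noteq> top"
  unfolding coatom_def by auto

lemma coatom_sup_eq_top:
  assumes "coatom c" "\<not> y \<le> c"
  shows "sup y c = top"
proof -
  have "sup y c = c \<or> sup y c = top" using assms(1) unfolding coatom_def by simp
  with assms(2) show ?thesis by (metis sup.cobounded1)
qed

locale interior_operator =
  fixes \<eta> :: "'a::complete_lattice \<Rightarrow> 'a"
  assumes deflationary: "\<eta> x \<le> x"
    and mono: "y \<le> x \<Longrightarrow> \<eta> y \<le> \<eta> x"
    and idem: "\<eta> (\<eta> x) = \<eta> x"
    and top: "\<eta> top = top"
    and Sup_eq_const: "X \<noteq> {} \<Longrightarrow> \<forall>x\<in>X. \<eta> x = u \<Longrightarrow> \<eta> (Sup X) = u"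
    and sup_inf_distrib: "sup (\<eta> x) (inf y z) = inf (sup (\<eta> x) y) (sup (\<eta> x) z)"

lemma equa_interior_imp_interior_operator:
  "equa_interior TYPE('b) \<eta> \<Longrightarrow> interior_operator \<eta>"
  unfolding equa_interior_def interior_operator_def by (elim conjE) (intro conjI; blast)

context interior_operator
begin

lemma eq_betweenI:
  assumes "\<eta> v \<le> u" "u \<le> v"
  shows "\<eta> u = \<eta> v"
proof (rule antisym)
  show "\<eta> u \<le> \<eta> v" using assms(2) by (rule mono)
  show "\<eta> v \<le> \<eta> u" using mono[OF assms(1)] by (simp only: idem)
qed

lemma eq_top_iff: "\<eta> x = top \<longleftrightarrow> x = top"
  using deflationary[of x] top by (auto simp: top_unique)

lemma le_tau: "y \<le> tau \<eta> y"
  unfolding tau_def by (rule Sup_upper) simp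

lemma eta_tau: "\<eta> (tau \<eta> y) = \<eta> y"
  unfolding tau_def by (rule Sup_eq_const) auto

lemma tau_coatom:
  assumes "coatom c"
  shows "tau \<eta> c = c"
proof (rule ccontr)
  assume "tau \<eta> c \<noteq> c"
  with assms le_tau have "tau \<eta> c = top" unfolding coatom_def by blast
  then have "\<eta> c = top" using eta_tau[of c] top by simp
  with assms show False by (simp add: eq_top_iff coatom_neq_top)
qed

lemma le_inf_below_properly:
  assumes "coatom x" "coatom z" "below_properly x z a"
  shows "\<eta> a \<le> inf x z"
proof -
  have meet: "inf x z \<le> a" and "\<not> x \<le> a" "\<not> z \<le> a"
    using assms(3) unfolding below_properly_def by auto
  have "inf (sup (\<eta> a) x) (sup (\<eta> a) z) \<le> a"
    using meet deflationary[of a] by (simp flip: sup_inf_distrib)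
  with \<open>\<not> x \<le> a\<close> \<open>\<not> z \<le> a\<close> have "sup (\<eta> a) x \<noteq> top" "sup (\<eta> a) z \<noteq> top"
    by auto
  then have "\<eta> a \<le> x" "\<eta> a \<le> z"
    using coatom_sup_eq_top[OF assms(1)] coatom_sup_eq_top[OF assms(2)] by blast+
  then show ?thesis by simp
qed

lemma tau_inf_below_properly:
  assumes "coatom a" "coatom x" "coatom z" "below_properly x z a"
  shows "tau \<eta> (inf x z) = a"
proof -
  have "\<eta> (inf x z) = \<eta> a"
    using eq_betweenI le_inf_below_properly[OF assms(2-4)] assms(4)
    unfolding below_properly_def by blast
  then have "tau \<eta> (inf x z) = tau \<eta> a" unfolding tau_def by simp
  with tau_coatom[OF assms(1)] show ?thesis by simp
qed

lemma sup_eta_coatom_eq_top: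
  assumes "coatom a" "coatom x" "\<eta> a \<le> x" "\<not> x \<le> a"
  shows "sup (\<eta> x) a = top"
proof -
  have "\<not> \<eta> x \<le> a"
  proof
    assume "\<eta> x \<le> a"
    have "\<eta> x \<le> \<eta> a" using mono[OF \<open>\<eta> x \<le> a\<close>] by (simp only: idem)
    moreover have "\<eta> a \<le> \<eta> x" using mono[OF assms(3)] by (simp only: idem)
    ultimately have "\<eta> x = \<eta> a" by (rule antisym)
    then have "\<eta> (Sup {x, a}) = \<eta> x" by (intro Sup_eq_const) auto
    moreover have "sup x a = top" using assms(1,4) by (rule coatom_sup_eq_top)
    ultimately have "\<eta> x = top" by (simp add: top)
    with assms(2) show False by (simp add: eq_top_iff coatom_neq_top)
  qed
  with assms(1) show ?thesis by (rule coatom_sup_eq_top)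
qed

lemma sup_INF_coatoms_eq_top:
  assumes "prop_I9 \<eta>" "coatom a" "coatom x" "\<forall>i\<in>I. coatom (z i)"
    and "\<forall>i\<in>I. below_properly x (z i) a"
  shows "sup (\<eta> x) (INF i\<in>I. z i) = top"
proof (cases "I = {}")
  case False
  then obtain i where i: "i \<in> I" by blast
  define c where "c = sup (\<eta> x) (INF i\<in>I. z i)"
  have "tau \<eta> ` z ` I = z ` I"
    unfolding image_image using assms(4) tau_coatom by (intro image_cong) simp_all
  then have "Inf (tau \<eta> ` z ` I) = Inf (z ` I)" by simp
  also have "\<dots> \<le> c" unfolding c_def by (rule le_supI2) simp
  also have "c \<le> tau \<eta> c" by (rule le_tau)
  finally have "Inf (tau \<eta> ` z ` I) \<le> tau \<eta> c" .
  then have I9: "\<eta> (sup (\<eta> x) (Inf ((\<lambda>w. tau \<eta> (inf x w)) ` z ` I))) \<le> c"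
    using assms(1)[unfolded prop_I9_def, rule_format, of x c "z ` I"] unfolding c_def by simp
  have "(\<lambda>w. tau \<eta> (inf x w)) ` z ` I = {a}"
    using tau_inf_below_properly[OF assms(2,3)] assms(4,5) False by (auto simp: image_image)
  moreover have "sup (\<eta> x) a = top"
  proof -
    have "coatom (z i)" "below_properly x (z i) a" using assms(4,5) i by auto
    then have "\<eta> a \<le> inf x (z i)" "\<not> x \<le> a"
      using le_inf_below_properly[OF assms(3)] unfolding below_properly_def by auto
    then show ?thesis using sup_eta_coatom_eq_top[OF assms(2,3)] by simp
  qed
  ultimately have "top \<le> c" using I9 by (simp add: top)
  then show ?thesis unfolding c_def by (rule top_le)
qed simp

end

theorem theorem7p5:
  fixes \<eta> :: "'a::complete_lattice \<Rightarrow> 'a"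
    and a x :: 'a and z :: "'i \<Rightarrow> 'a" and I :: "'i set"
  assumes "algebraic_lattice TYPE('a)"
    and "equa_interior TYPE('b) \<eta>"
    and "prop_I9 \<eta>"
    and "coatom a" and "coatom x" and "\<forall>i\<in>I. coatom (z i)"
    and "\<forall>i\<in>I. below_properly x (z i) a"
  shows "sup (\<eta> x) (INF i\<in>I. z i) = top"
proof -
  interpret interior_operator \<eta>
    using assms(2) by (rule equa_interior_imp_interior_operator)
  show ?thesis using assms(3-) by (rule sup_INF_coatoms_eq_top)
qed

end
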